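(* Let $\Omega$ be a region of $\mathcal{C}^*_{n,A}$ and $\bm x\in\Omega$ with associated permutation $\pi$. (1) If $\bm y\in\Omega$ has associated permutation $\sigma$, then the partitions $p_\pi(\Omega)$ (computed from $\bm x$) and $p_\sigma(\Omega)$ (computed from $\bm y$) are equivalent. (2) Conversely, if $\sigma\in\mathfrak{S}_n$ admits a partition into consecutive subwords that is equivalent to $p_\pi(\Omega)$, then there exists $\bm y\in\Omega$ whose associated permutation is $\sigma$.
   Context: Let $A=\{a_1,\dots,a_m\}$ with $a_1>\dots>a_m>0$; $\mathcal{C}^*_{n,A}$ is the arrangement in $\mathbb{R}^n$ of hyperplanes $x_i-x_j=a_k$ ($i\ne j$, $1\le k\le m$), and regions are connected components of the complement. The associated permutation of $\bm x$ is the unique $\pi\in\mathfrak{S}_n$ with $x_{\pi(1)}\ge\dots\ge x_{\pi(n)}$ and $\pi^{-1}(i)<\pi^{-1}(j)$ whenever $i<j$ and $x_i=x_j$. Given $\bm x$ with associated permutation $\pi$, let $M_k$ ($1\le k\le m$) be the matrix $(\operatorname{sgn}(x_{\pi(s)}-x_{\pi(t)}-a_k))_{s,t\in[n]}$. Positions $s,t$ are equivalent if for every $k$ rows $s,t$ of $M_k$ have equally many $+$ entries and columns $s,t$ of $M_k$ have equally many $+$ entries; the classes are intervals of consecutive positions, and $p_\pi(\Omega)$ is the partition of the word $\pi(1)\cdots\pi(n)$ into the corresponding consecutive subwords (blocks). A partition of a permutation word into consecutive subwords $B_1|\cdots|B_s$ and a partition $C_1|\cdots|C_t$ of another permutation word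 are equivalent if $s=t$ and $C_j$ consists of exactly the same letters as $B_j$ for every $j$. *)

theory Defs
  imports "HOL-Analysis.Analysis" "HOL-Combinatorics.Permutations"
begin

(* Points of R^n are functions x :: nat => real with coordinates 0..n-1 (x i = 0 for i >= n);
   the topology is the product topology restricted to this copy of R^n. *)
definition Rn :: "nat \<Rightarrow> (nat \<Rightarrow> real) set" where
  "Rn n = {x. \<forall>i\<ge>n. x i = 0}"

definition arr_complement :: "nat \<Rightarrow> real set \<Rightarrow> (nat \<Rightarrow> real) set" where
  "arr_complement n A = {x \<in> Rn n. \<forall>i<n. \<forall>j<n. i \<noteq> j \<longrightarrow> (\<forall>a\<in>A. x i - x j \<noteq> a)}"

definition is_region :: "nat \<Rightarrow> real set \<Rightarrow> (nat \<Rightarrow> real) set \<Rightarrow> bool" where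
  "is_region n A \<Omega> \<longleftrightarrow> \<Omega> \<in> components (arr_complement n A)"

definition assoc_perm :: "nat \<Rightarrow> (nat \<Rightarrow> real) \<Rightarrow> (nat \<Rightarrow> nat) \<Rightarrow> bool" where
  "assoc_perm n x \<pi> \<longleftrightarrow> \<pi> permutes {..<n} \<and>
     (\<forall>s t. s < t \<and> t < n \<longrightarrow> x (\<pi> s) \<ge> x (\<pi> t)) \<and>
     (\<forall>i j. i < j \<and> j < n \<and> x i = x j \<longrightarrow> inv \<pi> i < inv \<pi> j)"

(* number of + entries in row s / column s of M_k = (sgn(x_{pi s} - x_{pi t} - a))_{s,t} *)
definition row_plus :: "nat \<Rightarrow> (nat \<Rightarrow> real) \<Rightarrow> (nat \<Rightarrow> nat) \<Rightarrow> real \<Rightarrow> nat \<Rightarrow> nat" where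
  "row_plus n x \<pi> a s = card {t. t < n \<and> sgn (x (\<pi> s) - x (\<pi> t) - a) = 1}"

definition col_plus :: "nat \<Rightarrow> (nat \<Rightarrow> real) \<Rightarrow> (nat \<Rightarrow> nat) \<Rightarrow> real \<Rightarrow> nat \<Rightarrow> nat" where
  "col_plus n x \<pi> a t = card {s. s < n \<and> sgn (x (\<pi> s) - x (\<pi> t) - a) = 1}"

definition pos_equiv :: "nat \<Rightarrow> real set \<Rightarrow> (nat \<Rightarrow> real) \<Rightarrow> (nat \<Rightarrow> nat) \<Rightarrow> nat \<Rightarrow> nat \<Rightarrow> bool" where
  "pos_equiv n A x \<pi> s t \<longleftrightarrow> (\<forall>a\<in>A. row_plus n x \<pi> a s = row_plus n x \<pi> a t \<and>
                                        col_plus n x \<pi> a s = col_plus n x \<pi> a t)"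

(* a partition of a word of length n into consecutive subwords is given by the list of
   block lengths (a composition of n) *)
definition composition :: "nat \<Rightarrow> nat list \<Rightarrow> bool" where
  "composition n ls \<longleftrightarrow> (\<forall>l\<in>set ls. l > 0) \<and> sum_list ls = n"

definition block_pos :: "nat list \<Rightarrow> nat \<Rightarrow> nat set" where
  "block_pos ls j = {sum_list (take j ls) ..< sum_list (take (Suc j) ls)}"

definition block_letters :: "(nat \<Rightarrow> nat) \<Rightarrow> nat list \<Rightarrow> nat set list" where
  "block_letters \<pi> ls = map (\<lambda>j. \<pi> ` block_pos ls j) [0..<length ls]"

(* ls describes p_pi(Omega) computed from x: its blocks are exactly the equivalence classes *)
definition is_p_partition :: "nat \<Rightarrow> real set \<Rightarrow> (nat \<Rightarrow> real) \<Rightarrow> (nat \<Rightarrow> nat) \<Rightarrow> nat list \<Rightarrow> bool" where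
  "is_p_partition n A x \<pi> ls \<longleftrightarrow> composition n ls \<and>
     (\<forall>s<n. \<forall>t<n. (\<exists>j<length ls. s \<in> block_pos ls j \<and> t \<in> block_pos ls j) \<longleftrightarrow> pos_equiv n A x \<pi> s t)"

definition part_equiv :: "nat set list \<Rightarrow> nat set list \<Rightarrow> bool" where
  "part_equiv B C \<longleftrightarrow> length B = length C \<and> (\<forall>j<length B. C ! j = B ! j)"

end

(* The sign pattern of the differences x_i - x_j - a is constant on a region, and the
   region is exactly the set of points of the complement with that pattern, as a segment
   between two such points avoids every hyperplane.  Call letters i and j twins if they
   compare in the same way with every letter against every threshold a.  Two positions
   have the same row and column counts in every M_k exactly when the letters there are
   twins, so the blocks of p_pi(Omega) are the twin classes, read along pi.
   In a decreasing order, the position of a letter is at least the number of non-twin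
   letters above it and less than that number plus the size of its twin class; comparing
   these bounds shows that the associated permutations of any two points of a region carry
   twin letters at each position, which gives (1).  For (2), a small perturbation of x
   inside the region realises sigma. *)

theory Submission
  imports Defs
begin

section \<open>Blocks of a composition\<close>

definition same_block :: "nat list \<Rightarrow> nat \<Rightarrow> nat \<Rightarrow> bool" where
  "same_block ls s t \<longleftrightarrow> (\<exists>j<length ls. s \<in> block_pos ls j \<and> t \<in> block_pos ls j)"

definition block_partition :: "nat \<Rightarrow> (nat \<Rightarrow> nat \<Rightarrow> bool) \<Rightarrow> nat list \<Rightarrow> bool" where
  "block_partition m E ls \<longleftrightarrow>
     composition m ls \<and> (\<forall>s<m. \<forall>t<m. same_block ls s t \<longleftrightarrow> E s t)"

lemma is_p_partition_iff_block_partition: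
  "is_p_partition n A x \<pi> ls \<longleftrightarrow> block_partition n (pos_equiv n A x \<pi>) ls"
  by (simp add: is_p_partition_def block_partition_def same_block_def)

lemma sum_list_take_mono: "i \<le> j \<Longrightarrow> sum_list (take i (ls :: nat list)) \<le> sum_list (take j ls)"
  using take_add[of i "j - i" ls] by simp

lemma block_pos_subset: "block_pos ls j \<subseteq> {..<sum_list ls}"
  unfolding block_pos_def
  by (metis append_take_drop_id ivl_subset le_add1 lessThan_atLeast0 sum_list_append zero_le)

lemma card_block_pos: "j < length ls \<Longrightarrow> card (block_pos ls j) = ls ! j"
  by (simp add: block_pos_def take_Suc_conv_app_nth)

lemma block_pos_unique: "s \<in> block_pos ls j \<Longrightarrow> s \<in> block_pos ls j' \<Longrightarrow> j = j'"
  using sum_list_take_mono[of "Suc j" j' ls] sum_list_take_mono[of "Suc j'" j ls]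
  unfolding block_pos_def by (cases j j' rule: linorder_cases) auto

lemma same_block_commute: "same_block ls s t \<longleftrightarrow> same_block ls t s"
  unfolding same_block_def by blast

lemma same_block_less: "same_block ls s t \<Longrightarrow> s < sum_list ls \<and> t < sum_list ls"
  unfolding same_block_def using block_pos_subset by blast

lemma same_block_snoc:
  "same_block (ls @ [l]) s t \<longleftrightarrow> same_block ls s t \<or>
     (s \<in> {sum_list ls..<sum_list ls + l} \<and> t \<in> {sum_list ls..<sum_list ls + l})"
proof -
  have "block_pos (ls @ [l]) j = block_pos ls j" if "j < length ls" for j
    using that by (simp add: block_pos_def)
  moreover have "block_pos (ls @ [l]) (length ls) = {sum_list ls..<sum_list ls + l}"
    by (simp add: block_pos_def)
  ultimately show ?thesis
    unfolding same_block_def by (auto simp: less_Suc_eq)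
qed

lemma block_partition_Suc:
  assumes "symp E" "block_partition m E ls" "composition (Suc m) ls'"
    and old: "\<And>s t. s < m \<Longrightarrow> t < m \<Longrightarrow> same_block ls' s t \<longleftrightarrow> same_block ls s t"
    and new: "\<And>s. s \<le> m \<Longrightarrow> same_block ls' s m \<longleftrightarrow> E s m"
  shows "block_partition (Suc m) E ls'"
  unfolding block_partition_def
proof (intro conjI \<open>composition (Suc m) ls'\<close> allI impI)
  fix s t assume "s < Suc m" "t < Suc m"
  then consider "s < m" "t < m" | "t = m" | "s = m" by linarith
  then show "same_block ls' s t \<longleftrightarrow> E s t"
  proof cases
    case 1
    then show ?thesis using old assms(2) by (simp add: block_partition_def)
  next
    case 2
    then show ?thesis using new[of s] \<open>s < Suc m\<close> by simp
  next
    case 3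
    then show ?thesis
      using new[of t] \<open>t < Suc m\<close> same_block_commute[of ls' s t] \<open>symp E\<close>
      by (auto dest: sympD)
  qed
qed

lemma block_partition_extend_last:
  assumes "equivp E" and part: "block_partition m E (bs @ [l])" and "E (m - 1) m"
  shows "block_partition (Suc m) E (bs @ [Suc l])"
proof -
  have sym: "symp E" using \<open>equivp E\<close> by (simp add: equivp_reflp_symp_transp)
  have "l > 0" and sum: "sum_list bs + l = m" and comp: "composition m (bs @ [l])"
    using part by (auto simp: block_partition_def composition_def)
  show ?thesis
  proof (rule block_partition_Suc[OF sym part])
    show "composition (Suc m) (bs @ [Suc l])"
      using comp by (auto simp: composition_def)
  next
    fix s t assume "s < m" "t < m"
    then show "same_block (bs @ [Suc l]) s t \<longleftrightarrow> same_block (bs @ [l]) s t"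
      using sum by (auto simp: same_block_snoc)
  next
    fix s assume "s \<le> m"
    have "same_block (bs @ [Suc l]) s m \<longleftrightarrow> sum_list bs \<le> s"
      using \<open>s \<le> m\<close> sum same_block_less[of bs s m] by (auto simp: same_block_snoc)
    also have "\<dots> \<longleftrightarrow> E s m"
    proof (cases "s = m")
      case False
      have "E s m \<longleftrightarrow> E s (m - 1)"
        using \<open>equivp E\<close> \<open>E (m - 1) m\<close> by (meson equivp_symp equivp_transp)
      also have "\<dots> \<longleftrightarrow> same_block (bs @ [l]) s (m - 1)"
        using part \<open>s \<le> m\<close> False \<open>l > 0\<close> sum by (simp add: block_partition_def)
      also have "\<dots> \<longleftrightarrow> sum_list bs \<le> s"
        using \<open>s \<le> m\<close> False \<open>l > 0\<close> sum same_block_less[of bs s "m - 1"]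
        by (auto simp: same_block_snoc)
      finally show ?thesis by simp
    qed (use \<open>equivp E\<close> sum in \<open>auto simp: equivp_reflp\<close>)
    finally show "same_block (bs @ [Suc l]) s m \<longleftrightarrow> E s m" .
  qed
qed

lemma block_partition_new_block:
  assumes "equivp E" and part: "block_partition m E ls" and "\<And>s. s < m \<Longrightarrow> \<not> E s m"
  shows "block_partition (Suc m) E (ls @ [1])"
proof -
  have sym: "symp E" using \<open>equivp E\<close> by (simp add: equivp_reflp_symp_transp)
  have sum: "sum_list ls = m" and comp: "composition m ls"
    using part by (auto simp: block_partition_def composition_def)
  show ?thesis
  proof (rule block_partition_Suc[OF sym part])
    show "composition (Suc m) (ls @ [1])"
      using comp by (auto simp: composition_def)
  next
    fix s t assume "s < m" "t < m"
    then show "same_block (ls @ [1]) s t \<longleftrightarrow> same_block ls s t"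
      using sum by (auto simp: same_block_snoc)
  next
    fix s assume "s \<le> m"
    then show "same_block (ls @ [1]) s m \<longleftrightarrow> E s m"
      using assms(3)[of s] sum same_block_less[of ls s m] \<open>equivp E\<close>
      by (auto simp: same_block_snoc equivp_reflp)
  qed
qed

lemma convex_equiv_block_partition:
  assumes "equivp E"
    and convex: "\<And>s u t. s \<le> u \<Longrightarrow> u \<le> t \<Longrightarrow> t < N \<Longrightarrow> E s t \<Longrightarrow> E s u"
    and "m \<le> N"
  shows "\<exists>ls. block_partition m E ls"
  using \<open>m \<le> N\<close>
proof (induction m)
  case 0
  show ?case by (intro exI[of _ "[]"]) (simp add: block_partition_def composition_def)
next
  case (Suc m)
  then obtain ls where part: "block_partition m E ls" by auto
  show ?case
  proof (cases "0 < m \<and> E (m - 1) m")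
    case True
    then obtain bs l where "ls = bs @ [l]"
      using part by (cases ls rule: rev_cases) (auto simp: block_partition_def composition_def)
    then show ?thesis using block_partition_extend_last \<open>equivp E\<close> part True by blast
  next
    case False
    have "\<not> E s m" if "s < m" for s
    proof
      assume "E s m"
      then have "E s (m - 1)" using convex[of s "m - 1" m] that Suc.prems by auto
      with \<open>E s m\<close> have "E (m - 1) m"
        using \<open>equivp E\<close> by (meson equivp_symp equivp_transp)
      then show False using False that by simp
    qed
    then show ?thesis using block_partition_new_block \<open>equivp E\<close> part by blast
  qed
qed

section \<open>Twin letters\<close>

definition twins :: "nat \<Rightarrow> real set \<Rightarrow> (nat \<Rightarrow> real) \<Rightarrow> nat \<Rightarrow> nat \<Rightarrow> bool" where
  "twins n A z i u \<longleftrightarrow>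
     (\<forall>a\<in>A. \<forall>v<n. (z i - z v > a \<longleftrightarrow> z u - z v > a) \<and> (z v - z i > a \<longleftrightarrow> z v - z u > a))"

lemma twinsD:
  assumes "twins n A z i u" "a \<in> A" "v < n"
  shows "z i - z v > a \<longleftrightarrow> z u - z v > a" and "z v - z i > a \<longleftrightarrow> z v - z u > a"
  using assms by (simp_all add: twins_def)

lemma equivp_twins: "equivp (twins n A z)"
  by (intro equivpI reflpI sympI transpI) (auto simp: twins_def)

lemma twins_sym: "twins n A z i u \<Longrightarrow> twins n A z u i"
  by (metis equivp_symp equivp_twins)

lemma twins_trans: "twins n A z i u \<Longrightarrow> twins n A z u w \<Longrightarrow> twins n A z i w"
  by (metis equivp_transp equivp_twins)

lemma twins_if_eq: "z i = z u \<Longrightarrow> twins n A z i u"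
  by (simp add: twins_def)

lemma twins_between:
  assumes "twins n A z i u" "z u \<le> z w" "z w \<le> z i"
  shows "twins n A z i w"
  using assms unfolding twins_def by (meson less_le_trans diff_right_mono diff_left_mono)

lemma card_permutes_Collect:
  assumes "\<rho> permutes {..<n}"
  shows "card {t. t < n \<and> P (\<rho> t)} = card {v. v < n \<and> P v}"
proof -
  have "\<rho> ` {t. t < n \<and> P (\<rho> t)} = {v. v < n \<and> P v}"
  proof (intro equalityI subsetI)
    fix v assume "v \<in> {v. v < n \<and> P v}"
    moreover have "inv \<rho> v < n \<longleftrightarrow> v < n" "\<rho> (inv \<rho> v) = v"
      using permutes_in_image[OF permutes_inv[OF assms], of v] permutes_inverses(1)[OF assms]
      by auto
    ultimately show "v \<in> \<rho> ` {t. t < n \<and> P (\<rho> t)}" by (metis (mono_tags) image_eqI mem_Collect_eq)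
  qed (use permutes_in_image[OF assms] in auto)
  moreover have "inj_on \<rho> {t. t < n \<and> P (\<rho> t)}"
    using permutes_inj_on[OF assms] .
  ultimately show ?thesis by (metis card_image)
qed

lemma pos_equiv_iff_twins:
  assumes "\<rho> permutes {..<n}"
  shows "pos_equiv n A z \<rho> p q \<longleftrightarrow> twins n A z (\<rho> p) (\<rho> q)"
proof -
  define below where "below c a = {v. v < n \<and> z c - z v > a}" for c a
  define above where "above c a = {v. v < n \<and> z v - z c > a}" for c a
  have row: "row_plus n z \<rho> a s = card (below (\<rho> s) a)" for a s
    using card_permutes_Collect[OF assms, of "\<lambda>v. z (\<rho> s) - z v > a"]
    by (simp add: row_plus_def below_def sgn_1_pos)
  have col: "col_plus n z \<rho> a s = card (above (\<rho> s) a)" for a s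
    using card_permutes_Collect[OF assms, of "\<lambda>v. z v - z (\<rho> s) > a"]
    by (simp add: col_plus_def above_def sgn_1_pos)
  \<comment> \<open>For comparable letters these sets are nested, so equal cardinalities mean equal sets.\<close>
  have nested: "(card (below c a) = card (below d a) \<and> card (above c a) = card (above d a)) \<longleftrightarrow>
      below c a = below d a \<and> above c a = above d a" if "z d \<le> z c" for c d a
  proof -
    have "below d a \<subseteq> below c a" "above c a \<subseteq> above d a"
      using that by (auto simp: below_def above_def)
    moreover have "finite (below c a)" "finite (above d a)"
      by (auto simp: below_def above_def)
    ultimately show ?thesis by (metis card_subset_eq)
  qed
  have "(card (below (\<rho> p) a) = card (below (\<rho> q) a) \<and> card (above (\<rho> p) a) = card (above (\<rho> q) a))
      \<longleftrightarrow> below (\<rho> p) a = below (\<rho> q) a \<and> above (\<rho> p) a = above (\<rho> q) a" for a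
    using nested[of "\<rho> q" "\<rho> p" a] nested[of "\<rho> p" "\<rho> q" a]
    by (cases "z (\<rho> q) \<le> z (\<rho> p)") (auto simp: eq_commute)
  then have "pos_equiv n A z \<rho> p q \<longleftrightarrow>
      (\<forall>a\<in>A. below (\<rho> p) a = below (\<rho> q) a \<and> above (\<rho> p) a = above (\<rho> q) a)"
    unfolding pos_equiv_def row col by simp
  also have "\<dots> \<longleftrightarrow> twins n A z (\<rho> p) (\<rho> q)"
    unfolding twins_def below_def above_def by (auto simp: set_eq_iff)
  finally show ?thesis .
qed

section \<open>Twin letters at equal positions\<close>

definition same_pattern :: "nat \<Rightarrow> real set \<Rightarrow> (nat \<Rightarrow> real) \<Rightarrow> (nat \<Rightarrow> real) \<Rightarrow> bool" where
  "same_pattern n A x y \<longleftrightarrow> (\<forall>i<n. \<forall>u<n. \<forall>a\<in>A. x i - x u > a \<longleftrightarrow> y i - y u > a)"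

definition sorts_decreasing :: "nat \<Rightarrow> (nat \<Rightarrow> real) \<Rightarrow> (nat \<Rightarrow> nat) \<Rightarrow> bool" where
  "sorts_decreasing n z \<rho> \<longleftrightarrow> \<rho> permutes {..<n} \<and> (\<forall>s t. s \<le> t \<longrightarrow> t < n \<longrightarrow> z (\<rho> t) \<le> z (\<rho> s))"

lemma assoc_perm_sorts_decreasing: "assoc_perm n z \<rho> \<Longrightarrow> sorts_decreasing n z \<rho>"
  unfolding assoc_perm_def sorts_decreasing_def by (metis order.order_iff_strict order_refl)

lemma twins_same_pattern:
  assumes "same_pattern n A x y" "i < n" "u < n"
  shows "twins n A y i u \<longleftrightarrow> twins n A x i u"
  using assms unfolding same_pattern_def twins_def by auto

lemma less_same_pattern_if_not_twins:
  assumes "same_pattern n A x y" "c < n" "d < n" "\<not> twins n A x c d"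
  shows "x d < x c \<longleftrightarrow> y d < y c"
proof -
  obtain a v where "a \<in> A" "v < n"
    "\<not> ((x c - x v > a \<longleftrightarrow> x d - x v > a) \<and> (x v - x c > a \<longleftrightarrow> x v - x d > a))"
    using assms(4) unfolding twins_def by blast
  moreover have "x c - x v > a \<longleftrightarrow> y c - y v > a" "x d - x v > a \<longleftrightarrow> y d - y v > a"
      "x v - x c > a \<longleftrightarrow> y v - y c > a" "x v - x d > a \<longleftrightarrow> y v - y d > a"
    using assms(1-3) \<open>a \<in> A\<close> \<open>v < n\<close> unfolding same_pattern_def by auto
  ultimately show ?thesis by linarith
qed

definition nontwins_above :: "nat \<Rightarrow> real set \<Rightarrow> (nat \<Rightarrow> real) \<Rightarrow> nat \<Rightarrow> nat set" where
  "nontwins_above n A z c = {u. u < n \<and> \<not> twins n A z c u \<and> z c < z u}"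

definition twin_class :: "nat \<Rightarrow> real set \<Rightarrow> (nat \<Rightarrow> real) \<Rightarrow> nat \<Rightarrow> nat set" where
  "twin_class n A z c = {u. u < n \<and> twins n A z c u}"

lemma nontwins_above_same_pattern:
  assumes "same_pattern n A x y" "c < n"
  shows "nontwins_above n A y c = nontwins_above n A x c"
proof -
  have "y c < y u \<longleftrightarrow> x c < x u" if "u < n" "\<not> twins n A x c u" for u
    using less_same_pattern_if_not_twins[OF assms(1) that(1) assms(2)] that(2) twins_sym by blast
  then show ?thesis
    using twins_same_pattern[OF assms] unfolding nontwins_above_def by blast
qed

lemma twin_class_same_pattern:
  assumes "same_pattern n A x y" "c < n"
  shows "twin_class n A y c = twin_class n A x c"
  using twins_same_pattern[OF assms] unfolding twin_class_def by blast

lemma position_bounds: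
  assumes "sorts_decreasing n z \<rho>" "p < n"
  shows "card (nontwins_above n A z (\<rho> p)) \<le> p"
    and "p < card (nontwins_above n A z (\<rho> p)) + card (twin_class n A z (\<rho> p))"
proof -
  have perm: "\<rho> permutes {..<n}" and mono: "\<And>s t. s \<le> t \<Longrightarrow> t < n \<Longrightarrow> z (\<rho> t) \<le> z (\<rho> s)"
    using assms(1) by (auto simp: sorts_decreasing_def)
  have "nontwins_above n A z (\<rho> p) \<subseteq> \<rho> ` {..<p}"
  proof
    fix u assume u: "u \<in> nontwins_above n A z (\<rho> p)"
    then have "u < n" and less: "z (\<rho> p) < z u" by (auto simp: nontwins_above_def)
    then have "inv \<rho> u < n" and u_eq: "u = \<rho> (inv \<rho> u)"
      using permutes_in_image[OF permutes_inv[OF perm], of u] permutes_inverses(1)[OF perm] by auto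
    then have "inv \<rho> u < p" using mono[of p "inv \<rho> u"] less by (metis not_less)
    then show "u \<in> \<rho> ` {..<p}" using u_eq by blast
  qed
  then have "card (nontwins_above n A z (\<rho> p)) \<le> card (\<rho> ` {..<p})"
    by (intro card_mono) auto
  also have "\<dots> \<le> p" using card_image_le[of "{..<p}" \<rho>] by simp
  finally show "card (nontwins_above n A z (\<rho> p)) \<le> p" .
  have "\<rho> ` {..p} \<subseteq> nontwins_above n A z (\<rho> p) \<union> twin_class n A z (\<rho> p)"
  proof
    fix u assume "u \<in> \<rho> ` {..p}"
    then obtain q where "q \<le> p" "u = \<rho> q" by auto
    moreover have "u < n" using \<open>u = \<rho> q\<close> \<open>q \<le> p\<close> assms(2) permutes_in_image[OF perm] by auto
    ultimately show "u \<in> nontwins_above n A z (\<rho> p) \<union> twin_class n A z (\<rho> p)"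
      using mono[of q p] assms(2) twins_if_eq[of z "\<rho> p" u n A]
      by (force simp: nontwins_above_def twin_class_def)
  qed
  then have "card (\<rho> ` {..p}) \<le> card (nontwins_above n A z (\<rho> p) \<union> twin_class n A z (\<rho> p))"
    by (intro card_mono) (auto simp: nontwins_above_def twin_class_def)
  also have "\<dots> \<le> card (nontwins_above n A z (\<rho> p)) + card (twin_class n A z (\<rho> p))"
    by (rule card_Un_le)
  finally show "p < card (nontwins_above n A z (\<rho> p)) + card (twin_class n A z (\<rho> p))"
    using card_image[OF permutes_inj_on[OF perm, of "{..p}"]] by simp
qed

lemma card_nontwins_above_less:
  assumes "\<not> twins n A z c d" "z d < z c"
  shows "card (nontwins_above n A z c) + card (twin_class n A z c) \<le> card (nontwins_above n A z d)"
proof -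
  have "twin_class n A z c \<subseteq> nontwins_above n A z d"
  proof
    fix u assume "u \<in> twin_class n A z c"
    then have "u < n" and cu: "twins n A z c u" by (auto simp: twin_class_def)
    have "\<not> twins n A z d u" using cu assms(1) twins_sym twins_trans by metis
    moreover have "z d < z u"
      using twins_between[OF cu, of d] assms by (metis not_less less_imp_le)
    ultimately show "u \<in> nontwins_above n A z d" using \<open>u < n\<close> by (simp add: nontwins_above_def)
  qed
  moreover have "nontwins_above n A z c \<subseteq> nontwins_above n A z d"
  proof
    fix u assume "u \<in> nontwins_above n A z c"
    then have "u < n" and "\<not> twins n A z c u" and "z c < z u" by (auto simp: nontwins_above_def)
    moreover have "\<not> twins n A z d u"
      using twins_between[of n A z u d c] \<open>\<not> twins n A z c u\<close> \<open>z c < z u\<close> assms(2) twins_sym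
      by fastforce
    ultimately show "u \<in> nontwins_above n A z d" using assms(2) by (simp add: nontwins_above_def)
  qed
  moreover have "nontwins_above n A z c \<inter> twin_class n A z c = {}"
    by (auto simp: nontwins_above_def twin_class_def)
  moreover have "finite (nontwins_above n A z d)" "finite (twin_class n A z c)"
    by (simp_all add: nontwins_above_def twin_class_def)
  ultimately show ?thesis
    by (metis card_Un_disjoint card_mono finite_subset Un_least)
qed

lemma twins_at_same_position:
  assumes "sorts_decreasing n x \<pi>" "sorts_decreasing n y \<sigma>" "same_pattern n A x y" "p < n"
  shows "twins n A x (\<sigma> p) (\<pi> p)"
proof (rule ccontr)
  let ?N = "nontwins_above n A x" and ?T = "twin_class n A x"
  assume not_twins: "\<not> twins n A x (\<sigma> p) (\<pi> p)"
  have "\<sigma> p < n"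
    using assms(2,4) permutes_in_image by (fastforce simp: sorts_decreasing_def)
  then have bounds_\<sigma>: "card (?N (\<sigma> p)) \<le> p" "p < card (?N (\<sigma> p)) + card (?T (\<sigma> p))"
    using position_bounds[OF assms(2,4), of A]
    by (simp_all add: nontwins_above_same_pattern[OF assms(3)] twin_class_same_pattern[OF assms(3)])
  have bounds_\<pi>: "card (?N (\<pi> p)) \<le> p" "p < card (?N (\<pi> p)) + card (?T (\<pi> p))"
    using position_bounds[OF assms(1,4)] by simp_all
  have "x (\<sigma> p) \<noteq> x (\<pi> p)" using not_twins twins_if_eq by metis
  then consider "x (\<pi> p) < x (\<sigma> p)" | "x (\<sigma> p) < x (\<pi> p)" by linarith
  then show False
  proof cases
    case 1
    with card_nontwins_above_less[OF not_twins] show False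
      using bounds_\<sigma> bounds_\<pi> by linarith
  next
    case 2
    moreover have "\<not> twins n A x (\<pi> p) (\<sigma> p)" using not_twins twins_sym by blast
    ultimately show False
      using card_nontwins_above_less[of n A x "\<pi> p" "\<sigma> p"] bounds_\<sigma> bounds_\<pi> by linarith
  qed
qed

section \<open>Regions and sign patterns\<close>

lemma region_eq_component:
  assumes "is_region n A \<Omega>" "x \<in> \<Omega>"
  shows "\<Omega> = connected_component_set (arr_complement n A) x"
  using assms unfolding is_region_def components_iff by (metis connected_component_eq)

lemma region_same_pattern:
  assumes "is_region n A \<Omega>" "x \<in> \<Omega>" "y \<in> \<Omega>"
  shows "same_pattern n A x y"
  unfolding same_pattern_def
proof (intro allI impI ballI)
  fix i u a assume "i < n" "u < n" "a \<in> A"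
  show "x i - x u > a \<longleftrightarrow> y i - y u > a"
  proof (cases "i = u")
    case False
    let ?f = "\<lambda>z :: nat \<Rightarrow> real. z i - z u"
    have "connected \<Omega>" and sub: "\<Omega> \<subseteq> arr_complement n A"
      using assms(1) by (auto simp: is_region_def dest: in_components_connected in_components_subset)
    moreover have "continuous_on \<Omega> ?f"
      by (intro continuous_intros continuous_on_subset[OF continuous_on_product_coordinates]) auto
    ultimately have "connected (?f ` \<Omega>)" using connected_continuous_image by blast
    moreover have "a \<notin> ?f ` \<Omega>"
      using sub False \<open>i < n\<close> \<open>u < n\<close> \<open>a \<in> A\<close> by (force simp: arr_complement_def)
    ultimately have "\<not> (?f p \<le> a \<and> a \<le> ?f q)" if "p \<in> \<Omega>" "q \<in> \<Omega>" for p q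
      using that unfolding connected_iff_interval by blast
    then show ?thesis using assms(2,3) by force
  qed simp
qed

lemma convex_comb_same_side:
  fixes X Y a t :: real
  assumes "X \<noteq> a" "Y \<noteq> a" "X > a \<longleftrightarrow> Y > a" "0 \<le> t" "t \<le> 1"
  shows "(1 - t) * X + t * Y \<noteq> a"
proof (cases "X < a")
  case True
  then show ?thesis using assms convex_bound_lt[of X a Y "1 - t" t] by auto
next
  case False
  then show ?thesis using assms convex_bound_lt[of "- X" "- a" "- Y" "1 - t" t] by auto
qed

lemma same_pattern_connected:
  assumes x: "x \<in> arr_complement n A" and y: "y \<in> arr_complement n A"
    and pattern: "same_pattern n A x y"
  shows "connected_component (arr_complement n A) x y"
proof -
  define g where "g t = (\<lambda>k. (1 - t) * x k + t * y k)" for t :: real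
  have "g t \<in> arr_complement n A" if t: "0 \<le> t" "t \<le> 1" for t
  proof -
    have "g t \<in> Rn n" using x y by (simp add: arr_complement_def Rn_def g_def)
    moreover have "g t i - g t u \<noteq> a" if "i < n" "u < n" "i \<noteq> u" "a \<in> A" for i u a
    proof -
      have "g t i - g t u = (1 - t) * (x i - x u) + t * (y i - y u)"
        by (simp add: g_def algebra_simps)
      moreover have "x i - x u \<noteq> a" "y i - y u \<noteq> a"
        using x y that by (simp_all add: arr_complement_def)
      moreover have "x i - x u > a \<longleftrightarrow> y i - y u > a"
        using pattern that by (simp add: same_pattern_def)
      ultimately show ?thesis using convex_comb_same_side t by presburger
    qed
    ultimately show ?thesis by (simp add: arr_complement_def)
  qed
  then have "g ` {0..1} \<subseteq> arr_complement n A" by auto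
  moreover have "connected (g ` {0..1})"
    by (intro connected_continuous_image connected_Icc)
      (auto simp: g_def intro!: continuous_on_coordinatewise_then_product continuous_intros)
  moreover have "x \<in> g ` {0..1}" "y \<in> g ` {0..1}"
    using image_eqI[of x g 0 "{0..1}"] image_eqI[of y g 1 "{0..1}"] by (simp_all add: g_def)
  ultimately show ?thesis by (blast intro: connected_componentI)
qed

lemma block_letters_eq_iff_twins:
  assumes part: "is_p_partition n A x \<pi> ls"
    and \<pi>: "\<pi> permutes {..<n}" and \<sigma>: "\<sigma> permutes {..<n}"
  shows "block_letters \<sigma> ls = block_letters \<pi> ls \<longleftrightarrow> (\<forall>p<n. twins n A x (\<pi> p) (\<sigma> p))"
proof -
  have blocks: "\<And>s t. s < n \<Longrightarrow> t < n \<Longrightarrow> same_block ls s t \<longleftrightarrow> twins n A x (\<pi> s) (\<pi> t)"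
    using part
    by (simp add: is_p_partition_iff_block_partition block_partition_def pos_equiv_iff_twins[OF \<pi>])
  have in_range: "s \<in> block_pos ls j \<Longrightarrow> s < n" for s j
    using part block_pos_subset by (fastforce simp: is_p_partition_def composition_def)
  have inv_\<pi>: "inv \<pi> v < n" "\<pi> (inv \<pi> v) = v" if "v < n" for v
    using that permutes_in_image[OF permutes_inv[OF \<pi>]] permutes_inverses(1)[OF \<pi>] by auto
  have "block_letters \<sigma> ls = block_letters \<pi> ls \<longleftrightarrow>
      (\<forall>j<length ls. \<sigma> ` block_pos ls j = \<pi> ` block_pos ls j)"
    by (simp add: block_letters_def atLeast0LessThan Ball_def)
  also have "\<dots> \<longleftrightarrow> (\<forall>p<n. twins n A x (\<pi> p) (\<sigma> p))"
  proof (intro iffI allI impI)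
    fix p assume images: "\<forall>j<length ls. \<sigma> ` block_pos ls j = \<pi> ` block_pos ls j" and "p < n"
    then obtain j where j: "j < length ls" "p \<in> block_pos ls j"
      using blocks[of p p] equivp_reflp[OF equivp_twins] by (auto simp: same_block_def)
    then obtain q where "q \<in> block_pos ls j" "\<sigma> p = \<pi> q" using images by blast
    then show "twins n A x (\<pi> p) (\<sigma> p)"
      using blocks[of p q] j in_range by (auto simp: same_block_def)
  next
    fix j assume tw: "\<forall>p<n. twins n A x (\<pi> p) (\<sigma> p)" and "j < length ls"
    let ?B = "block_pos ls j"
    have "\<sigma> ` ?B \<subseteq> \<pi> ` ?B"
    proof
      fix v assume "v \<in> \<sigma> ` ?B"
      then obtain p where p: "p \<in> ?B" "v = \<sigma> p" by blast
      then have "p < n" "v < n" using in_range permutes_in_image[OF \<sigma>] by auto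
      then have "same_block ls (inv \<pi> v) p"
        using blocks[of "inv \<pi> v" p] tw inv_\<pi> p(2) twins_sym by metis
      then have "inv \<pi> v \<in> ?B" using p(1) block_pos_unique by (auto simp: same_block_def)
      then show "v \<in> \<pi> ` ?B" using inv_\<pi>(2)[OF \<open>v < n\<close>] by (metis image_eqI)
    qed
    moreover have "card (\<sigma> ` ?B) = card (\<pi> ` ?B)"
      using card_image permutes_inj_on[OF \<sigma>] permutes_inj_on[OF \<pi>] by metis
    ultimately show "\<sigma> ` ?B = \<pi> ` ?B"
      by (simp add: card_subset_eq block_pos_def)
  qed
  finally show ?thesis .
qed

lemma part_equiv_block_letters_imp_eq:
  assumes "\<pi> permutes {..<n}" "\<sigma> permutes {..<n}"
    and "part_equiv (block_letters \<pi> ls) (block_letters \<sigma> ls')"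
  shows "ls' = ls"
proof (rule nth_equalityI)
  show len: "length ls' = length ls"
    using assms(3) by (simp add: part_equiv_def block_letters_def)
  fix j assume "j < length ls'"
  then have "\<sigma> ` block_pos ls' j = \<pi> ` block_pos ls j"
    using assms(3) len by (simp add: part_equiv_def block_letters_def)
  then have "card (block_pos ls' j) = card (block_pos ls j)"
    using card_image permutes_inj_on[OF assms(1)] permutes_inj_on[OF assms(2)] by metis
  then show "ls' ! j = ls ! j"
    using card_block_pos \<open>j < length ls'\<close> len by metis
qed

section \<open>Realising an equivalent partition\<close>

lemma complement_margin:
  assumes "finite A" "x \<in> arr_complement n A"
  shows "\<exists>\<delta>>0. \<forall>i<n. \<forall>u<n. i \<noteq> u \<longrightarrow> (\<forall>a\<in>A. \<delta> \<le> \<bar>x i - x u - a\<bar>)"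
proof -
  define S where "S = (\<lambda>(i, u, a). \<bar>x i - x u - a\<bar>) ` {(i, u, a). i < n \<and> u < n \<and> i \<noteq> u \<and> a \<in> A}"
  have "finite S"
  proof -
    have "{(i, u, a). i < n \<and> u < n \<and> i \<noteq> u \<and> a \<in> A} \<subseteq> {..<n} \<times> {..<n} \<times> A" by auto
    then show ?thesis
      unfolding S_def using assms(1) by (meson finite_SigmaI finite_imageI finite_lessThan finite_subset)
  qed
  moreover have "\<forall>d\<in>S. d > 0" using assms(2) by (auto simp: S_def arr_complement_def)
  ultimately have "Min (insert 1 S) > 0" by simp
  moreover have "Min (insert 1 S) \<le> \<bar>x i - x u - a\<bar>" if "i < n" "u < n" "i \<noteq> u" "a \<in> A" for i u a
  proof -
    have "\<bar>x i - x u - a\<bar> \<in> S" unfolding S_def using that by force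
    then show ?thesis using \<open>finite S\<close> by simp
  qed
  ultimately show ?thesis by blast
qed

lemma shifted_assoc_perm:
  assumes sorted: "sorts_decreasing n x \<pi>" and \<sigma>: "\<sigma> permutes {..<n}" and "\<epsilon> > 0"
    and y_\<sigma>: "\<And>s. s < n \<Longrightarrow> y (\<sigma> s) = x (\<pi> s) - \<epsilon> * real s"
  shows "assoc_perm n y \<sigma>"
proof -
  have decreasing: "y (\<sigma> t) < y (\<sigma> s)" if "s < t" "t < n" for s t
  proof -
    have "x (\<pi> t) \<le> x (\<pi> s)" using sorted that by (simp add: sorts_decreasing_def)
    moreover have "\<epsilon> * real s < \<epsilon> * real t" using that \<open>\<epsilon> > 0\<close> by simp
    ultimately show ?thesis using y_\<sigma>[of s] y_\<sigma>[of t] that by linarith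
  qed
  have inv_\<sigma>: "inv \<sigma> v < n" "\<sigma> (inv \<sigma> v) = v" if "v < n" for v
    using that permutes_in_image[OF permutes_inv[OF \<sigma>]] permutes_inverses(1)[OF \<sigma>] by auto
  show ?thesis
    unfolding assoc_perm_def
  proof (intro conjI \<sigma> allI impI)
    fix s t assume "s < t \<and> t < n"
    then show "y (\<sigma> t) \<le> y (\<sigma> s)" using decreasing by (simp add: less_imp_le)
  next
    fix i j assume ij: "i < j \<and> j < n \<and> y i = y j"
    then have i: "\<sigma> (inv \<sigma> i) = i" "inv \<sigma> i < n" and j: "\<sigma> (inv \<sigma> j) = j" "inv \<sigma> j < n"
      using inv_\<sigma> by auto
    then have "inv \<sigma> i \<noteq> inv \<sigma> j" using ij by (metis less_irrefl)
    moreover have "\<not> inv \<sigma> j < inv \<sigma> i"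
      using decreasing[of "inv \<sigma> j" "inv \<sigma> i"] i j ij by auto
    ultimately show "inv \<sigma> i < inv \<sigma> j" by simp
  qed
qed

text \<open>The new point gives letter \<open>\<sigma> s\<close> the value of letter \<open>\<pi> s\<close>, lowered by
  \<open>s \<epsilon>\<close>: twin letters are interchangeable, and a shift below the margin of the
  arrangement changes no comparison while breaking all ties in the order of \<open>\<sigma>\<close>.\<close>

lemma twin_perturbation:
  assumes "finite A" and x: "x \<in> arr_complement n A" and sorted: "sorts_decreasing n x \<pi>"
    and \<sigma>: "\<sigma> permutes {..<n}" and tw: "\<forall>p<n. twins n A x (\<pi> p) (\<sigma> p)"
  shows "\<exists>y \<in> arr_complement n A. same_pattern n A x y \<and> assoc_perm n y \<sigma>"
proof -
  obtain \<delta> where "\<delta> > 0"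
    and margin: "\<And>i u a. i < n \<Longrightarrow> u < n \<Longrightarrow> i \<noteq> u \<Longrightarrow> a \<in> A \<Longrightarrow> \<delta> \<le> \<bar>x i - x u - a\<bar>"
    using complement_margin[OF assms(1,2)] by blast
  define \<epsilon> where "\<epsilon> = \<delta> / (real n + 1)"
  have "\<epsilon> > 0" "\<epsilon> * real n < \<delta>"
    using \<open>\<delta> > 0\<close> by (simp_all add: \<epsilon>_def field_simps)
  have \<pi>: "\<pi> permutes {..<n}" using sorted by (simp add: sorts_decreasing_def)
  have in_range: "\<And>s. s < n \<Longrightarrow> \<pi> s < n" "\<And>s. s < n \<Longrightarrow> \<sigma> s < n"
    using permutes_in_image[OF \<pi>] permutes_in_image[OF \<sigma>] by auto
  have inv_\<sigma>: "inv \<sigma> v < n" "\<sigma> (inv \<sigma> v) = v" if "v < n" for v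
    using that permutes_in_image[OF permutes_inv[OF \<sigma>]] permutes_inverses(1)[OF \<sigma>] by auto
  define y where "y k = (if k < n then x (\<pi> (inv \<sigma> k)) - \<epsilon> * real (inv \<sigma> k) else 0)" for k
  have y_\<sigma>: "y (\<sigma> s) = x (\<pi> s) - \<epsilon> * real s" if "s < n" for s
    using that in_range permutes_inverses(2)[OF \<sigma>] by (simp add: y_def)
  have side: "(y i - y u > a \<longleftrightarrow> x i - x u > a) \<and> y i - y u \<noteq> a"
    if "i < n" "u < n" "i \<noteq> u" "a \<in> A" for i u a
  proof -
    define p q where "p = inv \<sigma> i" and "q = inv \<sigma> u"
    have pq: "p < n" "q < n" "i = \<sigma> p" "u = \<sigma> q"
      using inv_\<sigma> \<open>i < n\<close> \<open>u < n\<close> by (simp_all add: p_def q_def)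
    then have "\<pi> p \<noteq> \<pi> q" using \<open>i \<noteq> u\<close> permutes_inj[OF \<pi>] by (auto dest: injD)
    define D where "D = x (\<pi> p) - x (\<pi> q) - a"
    have "\<delta> \<le> \<bar>D\<bar>" unfolding D_def using margin in_range pq \<open>\<pi> p \<noteq> \<pi> q\<close> \<open>a \<in> A\<close> by blast
    moreover have "\<bar>real p - real q\<bar> \<le> real n" using pq by linarith
    then have "\<bar>\<epsilon> * (real p - real q)\<bar> \<le> \<epsilon> * real n"
      using \<open>\<epsilon> > 0\<close> by (simp add: abs_mult)
    moreover have "y i - y u - a = D - \<epsilon> * (real p - real q)"
      using y_\<sigma> pq by (simp add: D_def algebra_simps)
    ultimately have "(y i - y u > a \<longleftrightarrow> D > 0) \<and> y i - y u \<noteq> a"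
      using \<open>\<epsilon> * real n < \<delta>\<close> by linarith
    moreover have "D > 0 \<longleftrightarrow> x (\<sigma> p) - x (\<pi> q) > a"
      using twinsD(1)[of n A x "\<pi> p" "\<sigma> p" a "\<pi> q"] tw pq(1,2) in_range \<open>a \<in> A\<close>
      by (simp add: D_def)
    moreover have "\<dots> \<longleftrightarrow> x (\<sigma> p) - x (\<sigma> q) > a"
      using twinsD(2)[of n A x "\<pi> q" "\<sigma> q" a "\<sigma> p"] tw pq(1,2) in_range \<open>a \<in> A\<close>
      by simp
    ultimately show ?thesis using pq by simp
  qed
  have "y \<in> Rn n" by (simp add: Rn_def y_def)
  then have "y \<in> arr_complement n A"
    using side by (simp add: arr_complement_def)
  moreover have "same_pattern n A x y"
    unfolding same_pattern_def
  proof (intro allI impI ballI)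
    fix i u a assume "i < n" "u < n" "a \<in> A"
    then show "x i - x u > a \<longleftrightarrow> y i - y u > a"
      using side[of i u a] by (cases "i = u") simp_all
  qed
  moreover have "assoc_perm n y \<sigma>"
    using shifted_assoc_perm[OF sorted \<sigma> \<open>\<epsilon> > 0\<close> y_\<sigma>] .
  ultimately show ?thesis by blast
qed

lemma region_p_partitions_equiv:
  assumes region: "is_region n A \<Omega>" and "x \<in> \<Omega>" "assoc_perm n x \<pi>"
    and "y \<in> \<Omega>" "assoc_perm n y \<sigma>"
  shows "\<exists>ls1 ls2. is_p_partition n A x \<pi> ls1 \<and> is_p_partition n A y \<sigma> ls2 \<and>
           part_equiv (block_letters \<pi> ls1) (block_letters \<sigma> ls2)"
proof -
  have pattern: "same_pattern n A x y" using region_same_pattern[OF region] assms by blast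
  have sorted: "sorts_decreasing n x \<pi>" "sorts_decreasing n y \<sigma>"
    using assms assoc_perm_sorts_decreasing by blast+
  then have \<pi>: "\<pi> permutes {..<n}" and \<sigma>: "\<sigma> permutes {..<n}"
    by (simp_all add: sorts_decreasing_def)
  have tw: "twins n A x (\<pi> p) (\<sigma> p)" if "p < n" for p
    using twins_at_same_position[OF sorted pattern that] twins_sym by blast
  have "equivp (pos_equiv n A x \<pi>)"
    unfolding pos_equiv_def by (intro equivpI reflpI sympI transpI) auto
  moreover have "pos_equiv n A x \<pi> s u" if "s \<le> u" "u \<le> t" "t < n" "pos_equiv n A x \<pi> s t" for s u t
    using that twins_between[of n A x "\<pi> s" "\<pi> t" "\<pi> u"] sorted(1)
    by (auto simp: pos_equiv_iff_twins[OF \<pi>] sorts_decreasing_def)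
  ultimately obtain ls where part_x: "is_p_partition n A x \<pi> ls"
    using convex_equiv_block_partition[of "pos_equiv n A x \<pi>" n n]
    by (auto simp: is_p_partition_iff_block_partition)
  have "pos_equiv n A y \<sigma> s t \<longleftrightarrow> pos_equiv n A x \<pi> s t" if "s < n" "t < n" for s t
  proof -
    have "\<sigma> s < n" "\<sigma> t < n" using that permutes_in_image[OF \<sigma>] by auto
    then have "pos_equiv n A y \<sigma> s t \<longleftrightarrow> twins n A x (\<sigma> s) (\<sigma> t)"
      by (simp add: pos_equiv_iff_twins[OF \<sigma>] twins_same_pattern[OF pattern])
    also have "\<dots> \<longleftrightarrow> twins n A x (\<pi> s) (\<pi> t)"
      using tw that twins_sym twins_trans by metis
    finally show ?thesis by (simp add: pos_equiv_iff_twins[OF \<pi>])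
  qed
  then have "is_p_partition n A y \<sigma> ls"
    using part_x by (simp add: is_p_partition_iff_block_partition block_partition_def)
  moreover have "block_letters \<sigma> ls = block_letters \<pi> ls"
    using block_letters_eq_iff_twins[OF part_x \<pi> \<sigma>] tw by blast
  ultimately show ?thesis
    using part_x by (metis part_equiv_def)
qed

lemma region_realizes_equiv_partition:
  assumes "finite A" and region: "is_region n A \<Omega>" and "x \<in> \<Omega>" "assoc_perm n x \<pi>"
    and part: "is_p_partition n A x \<pi> ls" and \<sigma>: "\<sigma> permutes {..<n}"
    and equiv: "part_equiv (block_letters \<pi> ls) (block_letters \<sigma> ls')"
  shows "\<exists>y\<in>\<Omega>. assoc_perm n y \<sigma>"
proof -
  have sorted: "sorts_decreasing n x \<pi>" using assms assoc_perm_sorts_decreasing by blast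
  then have \<pi>: "\<pi> permutes {..<n}" by (simp add: sorts_decreasing_def)
  have "ls' = ls" using part_equiv_block_letters_imp_eq[OF \<pi> \<sigma> equiv] .
  then have "block_letters \<sigma> ls = block_letters \<pi> ls"
    using equiv by (intro nth_equalityI) (simp_all add: part_equiv_def)
  then have tw: "\<forall>p<n. twins n A x (\<pi> p) (\<sigma> p)"
    using block_letters_eq_iff_twins[OF part \<pi> \<sigma>] by blast
  have x: "x \<in> arr_complement n A"
    using region \<open>x \<in> \<Omega>\<close> by (auto simp: is_region_def dest: in_components_subset)
  obtain y where "y \<in> arr_complement n A" "same_pattern n A x y" "assoc_perm n y \<sigma>"
    using twin_perturbation[OF \<open>finite A\<close> x sorted \<sigma> tw] by blast
  moreover have "y \<in> \<Omega>"
    using same_pattern_connected[OF x] calculation region_eq_component[OF region \<open>x \<in> \<Omega>\<close>] by blast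
  ultimately show ?thesis by blast
qed

theorem lemma2p5:
  fixes n :: nat and A :: "real set" and \<Omega> :: "(nat \<Rightarrow> real) set"
    and x :: "nat \<Rightarrow> real" and \<pi> :: "nat \<Rightarrow> nat"
  assumes "finite A" and "\<forall>a\<in>A. a > 0"
    and "is_region n A \<Omega>" and "x \<in> \<Omega>" and "assoc_perm n x \<pi>"
  shows "(\<forall>y \<sigma>. y \<in> \<Omega> \<and> assoc_perm n y \<sigma> \<longrightarrow>
            (\<exists>ls1 ls2. is_p_partition n A x \<pi> ls1 \<and> is_p_partition n A y \<sigma> ls2 \<and>
                       part_equiv (block_letters \<pi> ls1) (block_letters \<sigma> ls2)))
       \<and> (\<forall>ls \<sigma> ls'. is_p_partition n A x \<pi> ls \<and> \<sigma> permutes {..<n} \<and> composition n ls' \<and>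
            part_equiv (block_letters \<pi> ls) (block_letters \<sigma> ls') \<longrightarrow>
            (\<exists>y\<in>\<Omega>. assoc_perm n y \<sigma>))"
  using region_p_partitions_equiv[OF assms(3,4,5)]
    region_realizes_equiv_partition[OF assms(1,3,4,5)] by blast

end
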